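(* For every temporal oriented tree $\mathcal T$, the connectivity graph $G$ of $\mathcal T$ contains no induced cycle of length $6$.
   Context: A temporal digraph is a pair $(D,\lambda)$ with $D=(V,A)$ a finite digraph and $\lambda:A\to 2^{\{1,\dots,t_{\max}\}}$ giving the time-steps at which each arc is active. A temporal oriented tree $\mathcal T=(T,\lambda)$ is one whose underlying digraph $T$ is an orientation of a tree. A temporal path is a sequence $(v_1,v_2,t_1),\dots,(v_{k-1},v_k,t_{k-1})$ with pairwise distinct $v_i$, $\overrightarrow{v_iv_{i+1}}\in A$, $t_i\in\lambda(\overrightarrow{v_iv_{i+1}})$ and $t_1<\dots<t_{k-1}$. Two vertices $u\ne v$ are temporally connected if there is a temporal path from $u$ to $v$ or from $v$ to $u$. The connectivity graph of $\mathcal T$ is the undirected graph $G$ with $V(G)=V(T)$ and $uv\in E(G)$ iff $u\neq v$ and $u,v$ are temporally connected. *)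

theory Defs
  imports Main
begin

definition temporal_digraph ::
  "'a set \<Rightarrow> ('a \<times> 'a) set \<Rightarrow> ('a \<times> 'a \<Rightarrow> nat set) \<Rightarrow> nat \<Rightarrow> bool" where
  "temporal_digraph V A lam tmax \<longleftrightarrow>
     finite V \<and> A \<subseteq> V \<times> V \<and> (\<forall>a\<in>A. lam a \<subseteq> {1..tmax})"

definition und_adj :: "('a \<times> 'a) set \<Rightarrow> 'a \<Rightarrow> 'a \<Rightarrow> bool" where
  "und_adj A u v \<longleftrightarrow> (u, v) \<in> A \<or> (v, u) \<in> A"

definition und_connected :: "'a set \<Rightarrow> ('a \<times> 'a) set \<Rightarrow> bool" where
  "und_connected V A \<longleftrightarrow> (\<forall>u\<in>V. \<forall>v\<in>V. (u, v) \<in> (A \<union> A\<inverse>)\<^sup>*)"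

definition und_acyclic :: "'a set \<Rightarrow> ('a \<times> 'a) set \<Rightarrow> bool" where
  "und_acyclic V A \<longleftrightarrow>
     \<not> (\<exists>cs. length cs \<ge> 3 \<and> distinct cs \<and> set cs \<subseteq> V \<and>
            (\<forall>i. Suc i < length cs \<longrightarrow> und_adj A (cs ! i) (cs ! Suc i)) \<and>
            und_adj A (last cs) (hd cs))"

definition oriented_tree :: "'a set \<Rightarrow> ('a \<times> 'a) set \<Rightarrow> bool" where
  "oriented_tree V A \<longleftrightarrow>
     A \<subseteq> V \<times> V \<and> (\<forall>(u, v)\<in>A. u \<noteq> v \<and> (v, u) \<notin> A) \<and>
     und_connected V A \<and> und_acyclic V A"

definition temporal_oriented_tree ::
  "'a set \<Rightarrow> ('a \<times> 'a) set \<Rightarrow> ('a \<times> 'a \<Rightarrow> nat set) \<Rightarrow> nat \<Rightarrow> bool" where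
  "temporal_oriented_tree V A lam tmax \<longleftrightarrow>
     temporal_digraph V A lam tmax \<and> oriented_tree V A"

definition temporal_path ::
  "('a \<times> 'a) set \<Rightarrow> ('a \<times> 'a \<Rightarrow> nat set) \<Rightarrow> 'a list \<Rightarrow> nat list \<Rightarrow> bool" where
  "temporal_path A lam vs ts \<longleftrightarrow>
     length vs \<ge> 2 \<and> length ts = length vs - 1 \<and> distinct vs \<and>
     (\<forall>i < length ts. (vs ! i, vs ! Suc i) \<in> A \<and> ts ! i \<in> lam (vs ! i, vs ! Suc i)) \<and>
     sorted_wrt (<) ts"

definition temporal_path_from_to ::
  "('a \<times> 'a) set \<Rightarrow> ('a \<times> 'a \<Rightarrow> nat set) \<Rightarrow> 'a \<Rightarrow> 'a \<Rightarrow> bool" where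
  "temporal_path_from_to A lam u v \<longleftrightarrow>
     (\<exists>vs ts. temporal_path A lam vs ts \<and> hd vs = u \<and> last vs = v)"

definition temporally_connected ::
  "('a \<times> 'a) set \<Rightarrow> ('a \<times> 'a \<Rightarrow> nat set) \<Rightarrow> 'a \<Rightarrow> 'a \<Rightarrow> bool" where
  "temporally_connected A lam u v \<longleftrightarrow>
     u \<noteq> v \<and> (temporal_path_from_to A lam u v \<or> temporal_path_from_to A lam v u)"

definition conn_graph_adj ::
  "'a set \<Rightarrow> ('a \<times> 'a) set \<Rightarrow> ('a \<times> 'a \<Rightarrow> nat set) \<Rightarrow> 'a \<Rightarrow> 'a \<Rightarrow> bool" where
  "conn_graph_adj V A lam u v \<longleftrightarrow> u \<in> V \<and> v \<in> V \<and> temporally_connected A lam u v"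

definition has_induced_cycle ::
  "'a set \<Rightarrow> ('a \<Rightarrow> 'a \<Rightarrow> bool) \<Rightarrow> nat \<Rightarrow> bool" where
  "has_induced_cycle V adj k \<longleftrightarrow>
     (\<exists>c :: nat \<Rightarrow> 'a. inj_on c {0..<k} \<and> c ` {0..<k} \<subseteq> V \<and>
        (\<forall>i<k. \<forall>j<k. i \<noteq> j \<longrightarrow>
           (adj (c i) (c j) \<longleftrightarrow> (j = Suc i mod k \<or> i = Suc j mod k))))"

end

theory Submission
  imports Defs
begin

text \<open>
  Let \<open>c\<^sub>0, \<dots>, c\<^sub>5\<close> be an induced 6-cycle of the connectivity graph and \<open>P\<^sub>i\<close> a temporal
  path joining \<open>c\<^sub>i\<close> and \<open>c\<^sub>i\<^sub>+\<^sub>1\<close>. In the underlying tree the vertex sets of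
  \<open>P\<^sub>0 \<union> P\<^sub>1\<close>, \<open>P\<^sub>2 \<union> P\<^sub>3\<close> and \<open>P\<^sub>4 \<union> P\<^sub>5\<close> connect \<open>c\<^sub>0\<close> to \<open>c\<^sub>2\<close>,
  \<open>c\<^sub>2\<close> to \<open>c\<^sub>4\<close> and \<open>c\<^sub>4\<close> to \<open>c\<^sub>0\<close>, so they have a common vertex \<open>x\<close>.
  Two temporal paths through \<open>x\<close> can be spliced there: the one that arrives at \<open>x\<close> before
  the other leaves it can continue along the other, so the start of one temporally reaches
  the end of the other. Since only consecutive \<open>c\<^sub>i\<close> are temporally connected, opposite paths
  \<open>P\<^sub>i, P\<^sub>i\<^sub>+\<^sub>3\<close> cannot both contain \<open>x\<close>, so \<open>x\<close> lies on \<open>P\<^sub>0, P\<^sub>2, P\<^sub>4\<close> or on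
  \<open>P\<^sub>1, P\<^sub>3, P\<^sub>5\<close>; for three paths the admissible splices are incompatible with the
  order of arrival and departure times at \<open>x\<close>.
\<close>

section \<open>Temporal walks\<close>

definition set_less :: "'b::linorder set \<Rightarrow> 'b set \<Rightarrow> bool" where
  "set_less S T \<longleftrightarrow> (\<forall>s\<in>S. \<forall>t\<in>T. s < t)"

lemma set_less_exchange:
  assumes "set_less S1 T1" "set_less S2 T2"
  shows "set_less S1 T2 \<or> set_less S2 T1"
proof (rule ccontr)
  assume "\<not> ?thesis"
  then obtain s1 t2 s2 t1 where "s1 \<in> S1" "t2 \<in> T2" "t2 \<le> s1" "s2 \<in> S2" "t1 \<in> T1" "t1 \<le> s2"
    unfolding set_less_def by (auto simp: not_less)
  moreover from calculation have "s1 < t1" "s2 < t2" using assms by (auto simp: set_less_def)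
  ultimately show False by order
qed

lemma set_less_exchange3:
  assumes "set_less S1 T1" "set_less S2 T2" "set_less S3 T3"
  shows "set_less S1 T2 \<or> set_less S2 T3 \<or> set_less S3 T1"
proof (rule ccontr)
  assume "\<not> ?thesis"
  then obtain s1 t2 s2 t3 s3 t1 where "s1 \<in> S1" "t2 \<in> T2" "t2 \<le> s1" "s2 \<in> S2" "t3 \<in> T3" "t3 \<le> s2"
    "s3 \<in> S3" "t1 \<in> T1" "t1 \<le> s3"
    unfolding set_less_def by (auto simp: not_less)
  moreover from calculation have "s1 < t1" "s2 < t2" "s3 < t3" using assms by (auto simp: set_less_def)
  ultimately show False by order
qed

fun temporal_walk :: "('a \<times> 'a) set \<Rightarrow> ('a \<times> 'a \<Rightarrow> nat set) \<Rightarrow> 'a list \<Rightarrow> nat list \<Rightarrow> bool" where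
  "temporal_walk A lam [v] [] = True"
| "temporal_walk A lam (u # v # vs) (t # ts) \<longleftrightarrow>
     (u, v) \<in> A \<and> t \<in> lam (u, v) \<and> (\<forall>s\<in>set ts. t < s) \<and> temporal_walk A lam (v # vs) ts"
| "temporal_walk A lam _ _ = False"

lemma temporal_walk_iff:
  "temporal_walk A lam vs ts \<longleftrightarrow> vs \<noteq> [] \<and> length ts = length vs - 1 \<and>
     (\<forall>i < length ts. (vs ! i, vs ! Suc i) \<in> A \<and> ts ! i \<in> lam (vs ! i, vs ! Suc i)) \<and>
     sorted_wrt (<) ts"
proof (induction A lam vs ts rule: temporal_walk.induct)
  case (2 A lam u v vs t ts)
  then show ?case by (auto simp: less_Suc_eq_0_disj)
qed auto

lemma temporal_path_iff_walk:
  "temporal_path A lam vs ts \<longleftrightarrow> 2 \<le> length vs \<and> distinct vs \<and> temporal_walk A lam vs ts"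
  unfolding temporal_path_def temporal_walk_iff by auto

lemma temporal_walk_singleton [simp]: "temporal_walk A lam [v] ts \<longleftrightarrow> ts = []"
  by (cases ts) auto

lemma temporal_walk_append:
  assumes "length a = length xs"
  shows "temporal_walk A lam (xs @ x # ys) (a @ b) \<longleftrightarrow>
    temporal_walk A lam (xs @ [x]) a \<and> temporal_walk A lam (x # ys) b \<and> set_less (set a) (set b)"
  using assms
proof (induction a xs rule: list_induct2)
  case (Cons t a u xs)
  then show ?case by (cases xs; cases a) (auto simp: set_less_def)
qed (simp add: set_less_def)

lemma temporal_walk_length: "temporal_walk A lam vs ts \<Longrightarrow> length ts = length vs - 1"
  by (simp add: temporal_walk_iff)

lemma temporal_walk_splitE:
  assumes "temporal_walk A lam (xs @ x # ys) ts"
  obtains a b where "ts = a @ b" "temporal_walk A lam (xs @ [x]) a" "temporal_walk A lam (x # ys) b"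
    "set_less (set a) (set b)"
proof -
  have "length (take (length xs) ts) = length xs"
    using temporal_walk_length[OF assms] by simp
  then show thesis
    using that temporal_walk_append[of "take (length xs) ts" xs A lam x ys "drop (length xs) ts"] assms
    by (metis append_take_drop_id)
qed

definition temporally_reaches :: "('a \<times> 'a) set \<Rightarrow> ('a \<times> 'a \<Rightarrow> nat set) \<Rightarrow> 'a \<Rightarrow> 'a \<Rightarrow> bool" where
  "temporally_reaches A lam u v \<longleftrightarrow> u = v \<or> temporal_path_from_to A lam u v"

lemma temporal_walk_reaches:
  "temporal_walk A lam vs ts \<Longrightarrow> temporally_reaches A lam (hd vs) (last vs)"
proof (induction "length vs" arbitrary: vs ts rule: less_induct)
  case less
  show ?case
  proof (cases "distinct vs")
    case True
    show ?thesis
    proof (cases "2 \<le> length vs")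
      case True
      then show ?thesis using \<open>distinct vs\<close> less.prems
        unfolding temporally_reaches_def temporal_path_from_to_def temporal_path_iff_walk by blast
    next
      case False
      then have "length vs = 1" using less.prems by (cases vs) (auto simp: temporal_walk_iff Suc_le_eq)
      then show ?thesis by (auto simp: length_Suc_conv temporally_reaches_def)
    qed
  next
    case False
    then obtain xs y ys zs where vs: "vs = xs @ y # ys @ y # zs"
      using not_distinct_decomp by fastforce
    obtain a b where a: "temporal_walk A lam (xs @ [y]) a" and
      b: "temporal_walk A lam (y # ys @ y # zs) b" and ab: "set_less (set a) (set b)"
      using less.prems vs temporal_walk_splitE by metis
    obtain b1 b2 where "b = b1 @ b2" and b2: "temporal_walk A lam (y # zs) b2"
      using temporal_walk_splitE[of A lam "y # ys" y zs b] b by (metis append_Cons)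
    then have "set_less (set a) (set b2)" using ab by (simp add: set_less_def)
    then have "temporal_walk A lam (xs @ y # zs) (a @ b2)"
      using temporal_walk_append[of a xs] temporal_walk_length[OF a] a b2 by simp
    moreover have "hd (xs @ y # zs) = hd vs" "last (xs @ y # zs) = last vs"
      using vs by (cases xs; simp)+
    moreover have "length (xs @ y # zs) < length vs" using vs by simp
    ultimately show ?thesis using less.hyps by metis
  qed
qed

section \<open>Temporal paths through a common vertex\<close>

lemma temporal_path_through:
  assumes "temporal_path A lam vs ts" "x \<in> set vs"
  obtains xs ys a b where "temporal_walk A lam (xs @ [x]) a" "temporal_walk A lam (x # ys) b"
    "set_less (set a) (set b)" "hd (xs @ [x]) = hd vs" "last (x # ys) = last vs"
proof -
  obtain xs ys where vs: "vs = xs @ x # ys" using split_list[OF assms(2)] by blast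
  then have "hd (xs @ [x]) = hd vs" "last (x # ys) = last vs" by (cases xs; simp)+
  then show thesis
    using that temporal_walk_splitE assms(1) vs by (metis temporal_path_iff_walk)
qed

lemma temporally_reaches_via:
  assumes "temporal_walk A lam (xs @ [x]) a" "temporal_walk A lam (x # ys) b" "set_less (set a) (set b)"
  shows "temporally_reaches A lam (hd (xs @ [x])) (last (x # ys))"
proof -
  have "temporal_walk A lam (xs @ x # ys) (a @ b)"
    using assms temporal_walk_append[of a xs] temporal_walk_length[OF assms(1)] by simp
  moreover have "hd (xs @ x # ys) = hd (xs @ [x])" "last (xs @ x # ys) = last (x # ys)"
    by (cases xs; simp)+
  ultimately show ?thesis using temporal_walk_reaches by metis
qed

lemma temporal_paths_cross:
  assumes "temporal_path A lam vs1 ts1" "temporal_path A lam vs2 ts2" "x \<in> set vs1" "x \<in> set vs2"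
  shows "temporally_reaches A lam (hd vs1) (last vs2) \<or> temporally_reaches A lam (hd vs2) (last vs1)"
proof -
  obtain xs1 ys1 a1 b1 where 1: "temporal_walk A lam (xs1 @ [x]) a1" "temporal_walk A lam (x # ys1) b1"
    "set_less (set a1) (set b1)" "hd (xs1 @ [x]) = hd vs1" "last (x # ys1) = last vs1"
    by (rule temporal_path_through[OF assms(1,3)])
  obtain xs2 ys2 a2 b2 where 2: "temporal_walk A lam (xs2 @ [x]) a2" "temporal_walk A lam (x # ys2) b2"
    "set_less (set a2) (set b2)" "hd (xs2 @ [x]) = hd vs2" "last (x # ys2) = last vs2"
    by (rule temporal_path_through[OF assms(2,4)])
  show ?thesis
    using set_less_exchange[OF 1(3) 2(3)] temporally_reaches_via[OF 1(1) 2(2)]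
      temporally_reaches_via[OF 2(1) 1(2)] 1(4,5) 2(4,5) by argo
qed

lemma temporal_paths_cross3:
  assumes "temporal_path A lam vs1 ts1" "temporal_path A lam vs2 ts2" "temporal_path A lam vs3 ts3"
    and "x \<in> set vs1" "x \<in> set vs2" "x \<in> set vs3"
  shows "temporally_reaches A lam (hd vs1) (last vs2) \<or> temporally_reaches A lam (hd vs2) (last vs3)
    \<or> temporally_reaches A lam (hd vs3) (last vs1)"
proof -
  obtain xs1 ys1 a1 b1 where 1: "temporal_walk A lam (xs1 @ [x]) a1" "temporal_walk A lam (x # ys1) b1"
    "set_less (set a1) (set b1)" "hd (xs1 @ [x]) = hd vs1" "last (x # ys1) = last vs1"
    by (rule temporal_path_through[OF assms(1,4)])
  obtain xs2 ys2 a2 b2 where 2: "temporal_walk A lam (xs2 @ [x]) a2" "temporal_walk A lam (x # ys2) b2"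
    "set_less (set a2) (set b2)" "hd (xs2 @ [x]) = hd vs2" "last (x # ys2) = last vs2"
    by (rule temporal_path_through[OF assms(2,5)])
  obtain xs3 ys3 a3 b3 where 3: "temporal_walk A lam (xs3 @ [x]) a3" "temporal_walk A lam (x # ys3) b3"
    "set_less (set a3) (set b3)" "hd (xs3 @ [x]) = hd vs3" "last (x # ys3) = last vs3"
    by (rule temporal_path_through[OF assms(3,6)])
  show ?thesis
    using set_less_exchange3[OF 1(3) 2(3) 3(3)] temporally_reaches_via[OF 1(1) 2(2)]
      temporally_reaches_via[OF 2(1) 3(2)] temporally_reaches_via[OF 3(1) 1(2)] 1(4,5) 2(4,5) 3(4,5)
    by argo
qed

lemma temporal_path_hd_neq_last: "temporal_path A lam vs ts \<Longrightarrow> hd vs \<noteq> last vs"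
  unfolding temporal_path_def by (cases vs) auto

lemma temporal_paths_disjoint:
  assumes "temporal_path A lam vs1 ts1" "temporal_path A lam vs2 ts2"
    and "\<And>u v. u \<in> {hd vs1, last vs1} \<Longrightarrow> v \<in> {hd vs2, last vs2} \<Longrightarrow>
      \<not> temporally_reaches A lam u v \<and> \<not> temporally_reaches A lam v u"
  shows "set vs1 \<inter> set vs2 = {}"
  using temporal_paths_cross[OF assms(1,2)] assms(3) by blast

lemma temporal_paths_disjoint3:
  fixes A :: "('a \<times> 'a) set" and lam :: "'a \<times> 'a \<Rightarrow> nat set"
  defines "R \<equiv> temporally_reaches A lam"
  assumes paths: "temporal_path A lam vs1 ts1" "temporal_path A lam vs2 ts2" "temporal_path A lam vs3 ts3"
    and ends: "{hd vs1, last vs1} = {a0, a1}" "{hd vs2, last vs2} = {a2, a3}" "{hd vs3, last vs3} = {a4, a5}"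
    and links: "\<And>u v. u \<in> {a0, a1} \<Longrightarrow> v \<in> {a2, a3} \<Longrightarrow> R u v \<or> R v u \<Longrightarrow> u = a1 \<and> v = a2"
      "\<And>u v. u \<in> {a2, a3} \<Longrightarrow> v \<in> {a4, a5} \<Longrightarrow> R u v \<or> R v u \<Longrightarrow> u = a3 \<and> v = a4"
      "\<And>u v. u \<in> {a4, a5} \<Longrightarrow> v \<in> {a0, a1} \<Longrightarrow> R u v \<or> R v u \<Longrightarrow> u = a5 \<and> v = a0"
  shows "set vs1 \<inter> set vs2 \<inter> set vs3 = {}"
proof (rule ccontr)
  txt \<open>A splice between two of the paths fixes the orientation of both; so all three are
    oriented alike, and then one of the two cyclic splices has no admissible endpoints.\<close>
  assume "set vs1 \<inter> set vs2 \<inter> set vs3 \<noteq> {}"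
  then obtain x where x: "x \<in> set vs1" "x \<in> set vs2" "x \<in> set vs3" by blast
  have cross: "R (hd vs1) (last vs2) \<or> R (hd vs2) (last vs1)"
    "R (hd vs2) (last vs3) \<or> R (hd vs3) (last vs2)" "R (hd vs3) (last vs1) \<or> R (hd vs1) (last vs3)"
    "R (hd vs1) (last vs2) \<or> R (hd vs2) (last vs3) \<or> R (hd vs3) (last vs1)"
    "R (hd vs2) (last vs1) \<or> R (hd vs3) (last vs2) \<or> R (hd vs1) (last vs3)"
    unfolding R_def
    using temporal_paths_cross[OF paths(1,2) x(1,2)] temporal_paths_cross[OF paths(2,3) x(2,3)]
      temporal_paths_cross[OF paths(3,1) x(3,1)] temporal_paths_cross3[OF paths x]
      temporal_paths_cross3[OF paths(2,1,3) x(2,1,3)] by blast+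
  have ne: "hd vs1 \<noteq> last vs1" "hd vs2 \<noteq> last vs2" "hd vs3 \<noteq> last vs3"
    using paths by (simp_all add: temporal_path_hd_neq_last)
  have orient: "(hd vs1 = a0 \<and> last vs1 = a1) \<or> (hd vs1 = a1 \<and> last vs1 = a0)"
    "(hd vs2 = a2 \<and> last vs2 = a3) \<or> (hd vs2 = a3 \<and> last vs2 = a2)"
    "(hd vs3 = a4 \<and> last vs3 = a5) \<or> (hd vs3 = a5 \<and> last vs3 = a4)"
    using ends by (simp_all add: doubleton_eq_iff)
  have "hd vs1 \<in> {a0, a1}" "last vs1 \<in> {a0, a1}" "hd vs2 \<in> {a2, a3}" "last vs2 \<in> {a2, a3}"
    "hd vs3 \<in> {a4, a5}" "last vs3 \<in> {a4, a5}"
    using ends by blast+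
  then have forced: "R (hd vs1) (last vs2) \<Longrightarrow> hd vs1 = a1 \<and> last vs2 = a2"
    "R (hd vs2) (last vs1) \<Longrightarrow> hd vs2 = a2 \<and> last vs1 = a1"
    "R (hd vs2) (last vs3) \<Longrightarrow> hd vs2 = a3 \<and> last vs3 = a4"
    "R (hd vs3) (last vs2) \<Longrightarrow> hd vs3 = a4 \<and> last vs2 = a3"
    "R (hd vs3) (last vs1) \<Longrightarrow> hd vs3 = a5 \<and> last vs1 = a0"
    "R (hd vs1) (last vs3) \<Longrightarrow> hd vs1 = a0 \<and> last vs3 = a5"
    using links by blast+
  show False using orient ne forced cross by metis
qed

section \<open>Connecting sets in a forest\<close>

lemma und_adj_commute: "und_adj A u v \<longleftrightarrow> und_adj A v u"
  by (auto simp: und_adj_def)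

lemma successively_und_adj_rev [simp]:
  "successively (und_adj A) (rev xs) \<longleftrightarrow> successively (und_adj A) xs"
  by (metis (no_types, lifting) successively_mono successively_rev und_adj_commute)

lemma successively_append_ConsD:
  "successively R (xs @ y # ys) \<Longrightarrow> successively R (xs @ [y]) \<and> successively R (y # ys)"
  by (auto simp: successively_append_iff)

lemma successively_remove_loop:
  "successively R (xs @ y # ys @ y # zs) \<Longrightarrow> successively R (xs @ y # zs)"
  by (auto simp: successively_append_iff successively_Cons)

text \<open>Consecutive vertices of a walk may coincide, so that walks sharing an endpoint
  concatenate to a walk.\<close>

definition und_walk :: "('a \<times> 'a) set \<Rightarrow> 'a set \<Rightarrow> 'a list \<Rightarrow> bool" where
  "und_walk A V W \<longleftrightarrow> W \<noteq> [] \<and> set W \<subseteq> V \<and> successively (\<lambda>u v. u = v \<or> und_adj A u v) W"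

definition und_path :: "('a \<times> 'a) set \<Rightarrow> 'a set \<Rightarrow> 'a list \<Rightarrow> bool" where
  "und_path A V P \<longleftrightarrow> P \<noteq> [] \<and> set P \<subseteq> V \<and> distinct P \<and> successively (und_adj A) P"

definition und_connects :: "('a \<times> 'a) set \<Rightarrow> 'a set \<Rightarrow> 'a set \<Rightarrow> 'a \<Rightarrow> 'a \<Rightarrow> bool" where
  "und_connects A V S u v \<longleftrightarrow> (\<exists>W. und_walk A V W \<and> hd W = u \<and> last W = v \<and> set W \<subseteq> S)"

lemma und_walk_rev: "und_walk A V W \<Longrightarrow> und_walk A V (rev W)"
  unfolding und_walk_def by (auto simp: und_adj_commute elim: successively_mono)

lemma und_walk_append: "und_walk A V W \<Longrightarrow> und_walk A V W' \<Longrightarrow> last W = hd W' \<Longrightarrow> und_walk A V (W @ W')"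
  unfolding und_walk_def by (auto simp: successively_append_iff)

lemma und_connects_commute: "und_connects A V S u v \<Longrightarrow> und_connects A V S v u"
  unfolding und_connects_def
proof (elim exE conjE)
  fix W assume "und_walk A V W" "hd W = u" "last W = v" "set W \<subseteq> S"
  then show "\<exists>W. und_walk A V W \<and> hd W = v \<and> last W = u \<and> set W \<subseteq> S"
    by (intro exI[of _ "rev W"]) (auto simp: und_walk_rev hd_rev last_rev)
qed

lemma und_connects_trans:
  "und_connects A V S u v \<Longrightarrow> und_connects A V T v w \<Longrightarrow> und_connects A V (S \<union> T) u w"
  unfolding und_connects_def
proof (elim exE conjE)
  fix W W' assume W: "und_walk A V W" "hd W = u" "last W = v" "set W \<subseteq> S"
    and W': "und_walk A V W'" "hd W' = v" "last W' = w" "set W' \<subseteq> T"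
  then have "und_walk A V (W @ W')" by (simp add: und_walk_append)
  moreover have "W \<noteq> []" "W' \<noteq> []" using W W' by (simp_all add: und_walk_def)
  ultimately show "\<exists>W. und_walk A V W \<and> hd W = u \<and> last W = w \<and> set W \<subseteq> S \<union> T"
    using W W' by (intro exI[of _ "W @ W'"]) auto
qed

lemma und_walk_shortcut:
  "und_walk A V W \<Longrightarrow> \<exists>P. und_path A V P \<and> hd P = hd W \<and> last P = last W \<and> set P \<subseteq> set W"
proof (induction "length W" arbitrary: W rule: less_induct)
  case less
  show ?case
  proof (cases "distinct W")
    case True
    have "successively (\<lambda>u v. u = v \<or> und_adj A u v) W" using less.prems by (simp add: und_walk_def)
    with True have "successively (und_adj A) W"
      by (induction W) (auto simp: successively_Cons)
    then show ?thesis using True less.prems unfolding und_walk_def und_path_def by blast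
  next
    case False
    then obtain xs y ys zs where W: "W = xs @ y # ys @ y # zs"
      using not_distinct_decomp by fastforce
    have "und_walk A V (xs @ y # zs)"
      using less.prems W by (auto simp: und_walk_def dest: successively_remove_loop)
    moreover have "hd (xs @ y # zs) = hd W" "last (xs @ y # zs) = last W" "set (xs @ y # zs) \<subseteq> set W"
      using W by (cases xs; auto)+
    moreover have "length (xs @ y # zs) < length W" using W by simp
    ultimately show ?thesis using less.hyps by (metis order_trans)
  qed
qed

lemma und_acyclicD:
  assumes "und_acyclic V A" "3 \<le> length cs" "distinct cs" "set cs \<subseteq> V"
    "successively (und_adj A) cs" "und_adj A (last cs) (hd cs)"
  shows False
  using assms unfolding und_acyclic_def successively_conv_nth by blast

lemma und_acyclic_no_fork:
  assumes acyclic: "und_acyclic V A"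
    and P: "und_path A V (u # v # ps)" and P': "und_path A V (u # v' # ps')"
    and same_end: "last (v # ps) = last (v' # ps')"
  shows "v = v'"
proof (rule ccontr)
  assume "v \<noteq> v'"
  have "last (v' # ps') \<in> set (v # ps)" using same_end by (metis last_in_set list.distinct(1))
  then obtain ys y zs where Q: "v' # ps' = ys @ y # zs" and "y \<in> set (v # ps)"
    and ys: "\<forall>z\<in>set ys. z \<notin> set (v # ps)"
    using split_list_first_prop[of "v' # ps'" "\<lambda>z. z \<in> set (v # ps)"] last_in_set by blast
  then obtain as bs where Ps: "v # ps = as @ y # bs" using split_list by metis
  define cs where "cs = u # as @ y # rev ys"
  have "as \<noteq> [] \<or> ys \<noteq> []" using Ps Q \<open>v \<noteq> v'\<close> by (auto simp: Cons_eq_append_conv)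
  then have "3 \<le> length cs" unfolding cs_def by (cases as; cases ys) auto
  moreover have "distinct cs" "set cs \<subseteq> V"
    using P P' ys unfolding cs_def und_path_def Ps Q by auto
  moreover have "successively (und_adj A) cs"
  proof -
    have "successively (und_adj A) (u # as @ [y])"
      using P successively_append_ConsD[of _ "u # as"] unfolding und_path_def Ps by auto
    moreover have "successively (und_adj A) (ys @ [y])"
      using P' successively_append_ConsD[of _ ys] unfolding und_path_def Q
      by (auto simp: successively_Cons)
    ultimately have "successively (und_adj A) ((u # as @ [y]) @ rev ys)"
      unfolding successively_append_iff[of _ "u # as @ [y]"]
      by (auto simp: successively_append_iff hd_rev und_adj_commute)
    then show ?thesis by (simp add: cs_def)
  qed
  moreover have "und_adj A (last cs) (hd cs)"
  proof -
    have "last cs = v'" using Q unfolding cs_def by (cases ys) (auto simp: last_rev)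
    then show ?thesis using P' by (simp add: cs_def und_path_def und_adj_commute)
  qed
  ultimately show False using und_acyclicD[OF acyclic] by blast
qed

lemma und_path_tl: "und_path A V (u # v # ps) \<Longrightarrow> und_path A V (v # ps)"
  by (simp add: und_path_def)

lemma und_path_unique:
  assumes acyclic: "und_acyclic V A"
  shows "und_path A V P \<Longrightarrow> und_path A V P' \<Longrightarrow> hd P = hd P' \<Longrightarrow> last P = last P' \<Longrightarrow> P = P'"
proof (induction P arbitrary: P')
  case Nil
  then show ?case by (simp add: und_path_def)
next
  case (Cons u rest)
  then obtain rest' where P': "P' = u # rest'" by (cases P') (auto simp: und_path_def)
  show ?case
  proof (cases rest)
    case Nil
    then show ?thesis using Cons.prems P'
      by (cases rest') (auto simp: und_path_def split: if_splits)
  next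
    case (Cons v ps)
    then obtain v' ps' where rest': "rest' = v' # ps'"
      using \<open>und_path A V (u # rest)\<close> \<open>last (u # rest) = last P'\<close> P'
      by (cases rest') (auto simp: und_path_def split: if_splits)
    have "v = v'"
      using und_acyclic_no_fork[OF acyclic] Cons.prems P' Cons rest' by simp
    moreover have "und_path A V rest" "und_path A V rest'"
      using Cons.prems P' Cons rest' und_path_tl by auto
    ultimately show ?thesis
      using Cons.IH[of rest'] Cons.prems(4) P' Cons rest' by simp
  qed
qed

lemma und_connects_path:
  "und_connects A V S u v \<Longrightarrow> \<exists>P. und_path A V P \<and> hd P = u \<and> last P = v \<and> set P \<subseteq> S"
  unfolding und_connects_def by (metis und_walk_shortcut order_trans)

lemma und_path_subset_connects:
  assumes "und_acyclic V A" "und_path A V P" "und_connects A V S (hd P) (last P)"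
  shows "set P \<subseteq> S"
  using und_connects_path[OF assms(3)] und_path_unique[OF assms(1,2)] by metis

lemma und_path_rev: "und_path A V P \<Longrightarrow> und_path A V (rev P)"
  by (simp add: und_path_def del: successively_rev)

lemma und_acyclic_connects_meet:
  assumes acyclic: "und_acyclic V A" and "und_connects A V S1 a b" "und_connects A V S2 b c"
    "und_connects A V S3 c a"
  shows "S1 \<inter> S2 \<inter> S3 \<noteq> {}"
proof -
  obtain P where P: "und_path A V P" "hd P = a" "last P = b" "set P \<subseteq> S1"
    using und_connects_path[OF assms(2)] by blast
  obtain R where R: "und_path A V R" "hd R = a" "last R = c" "set R \<subseteq> S3"
    using und_connects_path[OF und_connects_commute[OF assms(4)]] by blast
  have "P \<noteq> []" "R \<noteq> []" using P(1) R(1) by (simp_all add: und_path_def)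
  then have "a \<in> set (rev P)" "a \<in> set R" using P(2) R(2) by (metis hd_in_set set_rev)+
  then obtain ys x zs where Ps: "rev P = ys @ x # zs" "x \<in> set R" and ys: "\<forall>z\<in>set ys. z \<notin> set R"
    using split_list_first_prop[of "rev P" "\<lambda>z. z \<in> set R"] by blast
  obtain us ws where Rs: "R = us @ x # ws" using split_list Ps(2) by metis
  define Q where "Q = ys @ x # ws"
  have "und_path A V Q"
  proof -
    have "und_path A V (ys @ x # zs)" using und_path_rev[OF P(1)] Ps(1) by simp
    then have "set ys \<subseteq> V" "distinct (ys @ [x])" "successively (und_adj A) (ys @ [x])"
      by (auto simp: und_path_def dest: successively_append_ConsD)
    moreover have "set (x # ws) \<subseteq> V" "distinct (x # ws)" "successively (und_adj A) (x # ws)"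
      using R(1) Rs by (auto simp: und_path_def dest: successively_append_ConsD)
    moreover have "set ys \<inter> set (x # ws) = {}" using ys Rs by auto
    ultimately show ?thesis
      unfolding Q_def und_path_def by (auto simp: successively_append_iff)
  qed
  moreover have "hd Q = b"
  proof -
    have "hd Q = hd (rev P)" using Ps(1) by (cases ys) (auto simp: Q_def)
    then show ?thesis using P(3) by (simp add: hd_rev)
  qed
  moreover have "last Q = c" using R(3) Rs by (simp add: Q_def)
  ultimately have "set Q \<subseteq> S2" using und_path_subset_connects[OF acyclic] assms(3) by metis
  moreover have "x \<in> set P" using Ps(1) by (metis set_rev in_set_conv_decomp)
  ultimately show ?thesis using P(4) R(4) Ps(2) by (auto simp: Q_def)
qed

lemma und_acyclic_hexagon_meet:
  fixes S :: "nat \<Rightarrow> 'a set" and c :: "nat \<Rightarrow> 'a"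
  assumes acyclic: "und_acyclic V A"
    and connects: "\<And>i. i < 6 \<Longrightarrow> und_connects A V (S i) (c i) (c ((i + 1) mod 6))"
  shows "(S 0 \<union> S 1) \<inter> (S 2 \<union> S 3) \<inter> (S 4 \<union> S 5) \<noteq> {}"
proof -
  have C: "und_connects A V (S 0) (c 0) (c 1)" "und_connects A V (S 1) (c 1) (c 2)"
    "und_connects A V (S 2) (c 2) (c 3)" "und_connects A V (S 3) (c 3) (c 4)"
    "und_connects A V (S 4) (c 4) (c 5)" "und_connects A V (S 5) (c 5) (c 0)"
    using connects[of 0] connects[of 1, unfolded one_add_one] connects[of 2] connects[of 3]
      connects[of 4] connects[of 5]
    by simp_all
  show ?thesis
    by (rule und_acyclic_connects_meet[OF acyclic und_connects_trans[OF C(1,2)]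
          und_connects_trans[OF C(3,4)] und_connects_trans[OF C(5,6)]])
qed

lemma temporal_walk_und_walk:
  "A \<subseteq> V \<times> V \<Longrightarrow> temporal_walk A lam (u # v # vs) ts \<Longrightarrow> und_walk A V (u # v # vs)"
proof (induction vs arbitrary: u v ts)
  case Nil
  then show ?case by (cases ts) (auto simp: und_walk_def und_adj_def)
next
  case (Cons w vs)
  then obtain t ts' where "ts = t # ts'" "(u, v) \<in> A" "und_walk A V (v # w # vs)"
    by (cases ts) auto
  then show ?case using Cons.prems(1) by (auto simp: und_walk_def und_adj_def)
qed

lemma temporal_path_und_connects:
  assumes "A \<subseteq> V \<times> V" "temporal_path A lam vs ts"
  shows "und_connects A V (set vs) (hd vs) (last vs)"
proof -
  obtain u v vs' where "vs = u # v # vs'"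
    using assms(2) by (cases vs rule: remdups_adj.cases) (auto simp: temporal_path_def)
  then show ?thesis
    using temporal_walk_und_walk[OF assms(1)] assms(2)
    unfolding und_connects_def temporal_path_iff_walk by blast
qed

section \<open>Induced cycles of the connectivity graph\<close>

lemma induced_cycle_temporal_paths:
  assumes "has_induced_cycle V (conn_graph_adj V A lam) k" "2 \<le> k"
  obtains P T c where
    "\<And>i. i < k \<Longrightarrow> temporal_path A lam (P i) (T i) \<and> {hd (P i), last (P i)} = {c i, c ((i + 1) mod k)}"
    "\<And>i j. i < k \<Longrightarrow> j < k \<Longrightarrow> temporally_reaches A lam (c i) (c j) \<Longrightarrow>
      i = j \<or> j = (i + 1) mod k \<or> i = (j + 1) mod k"
proof -
  obtain c where inj: "inj_on c {0..<k}" and cV: "c ` {0..<k} \<subseteq> V" and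
    adj: "\<forall>i<k. \<forall>j<k. i \<noteq> j \<longrightarrow>
      (conn_graph_adj V A lam (c i) (c j) \<longleftrightarrow> (j = Suc i mod k \<or> i = Suc j mod k))"
    using assms(1) unfolding has_induced_cycle_def by blast
  have "\<exists>p. temporal_path A lam (fst p) (snd p) \<and> {hd (fst p), last (fst p)} = {c i, c ((i + 1) mod k)}"
    if "i < k" for i
  proof -
    have "Suc i mod k \<noteq> i" "Suc i mod k < k" using that assms(2) by (auto simp: mod_Suc)
    then have "temporally_connected A lam (c i) (c ((i + 1) mod k))"
      using adj[rule_format, of i "Suc i mod k"] that by (simp add: conn_graph_adj_def)
    then show ?thesis
      unfolding temporally_connected_def temporal_path_from_to_def by (auto simp: insert_commute)
  qed
  then obtain p where "\<And>i. i < k \<Longrightarrow> temporal_path A lam (fst (p i)) (snd (p i)) \<and>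
      {hd (fst (p i)), last (fst (p i))} = {c i, c ((i + 1) mod k)}"
    by metis
  moreover have "i = j \<or> j = (i + 1) mod k \<or> i = (j + 1) mod k"
    if "i < k" "j < k" "temporally_reaches A lam (c i) (c j)" for i j
  proof (cases "i = j")
    case False
    then have "c i \<noteq> c j" using inj that(1,2) by (auto simp: inj_on_def)
    then have "conn_graph_adj V A lam (c i) (c j)"
      using that cV by (auto simp: temporally_reaches_def conn_graph_adj_def temporally_connected_def)
    then show ?thesis using adj[rule_format, OF that(1,2) False] by simp
  qed simp
  ultimately show thesis using that[of "\<lambda>i. fst (p i)" "\<lambda>i. snd (p i)" c] by blast
qed

lemma hexagon_temporal_paths_no_common_vertex:
  fixes c :: "nat \<Rightarrow> 'a" and P :: "nat \<Rightarrow> 'a list" and T :: "nat \<Rightarrow> nat list"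
    and A :: "('a \<times> 'a) set" and lam :: "'a \<times> 'a \<Rightarrow> nat set"
  defines "R \<equiv> temporally_reaches A lam"
  assumes paths: "\<And>i. i < 6 \<Longrightarrow> temporal_path A lam (P i) (T i) \<and> {hd (P i), last (P i)} = {c i, c ((i + 1) mod 6)}"
    and reach: "\<And>i j. i < 6 \<Longrightarrow> j < 6 \<Longrightarrow> temporally_reaches A lam (c i) (c j) \<Longrightarrow>
      i = j \<or> j = (i + 1) mod 6 \<or> i = (j + 1) mod 6"
  shows "(set (P 0) \<union> set (P 1)) \<inter> (set (P 2) \<union> set (P 3)) \<inter> (set (P 4) \<union> set (P 5)) = {}"
proof -
  have P: "temporal_path A lam (P 0) (T 0)" "{hd (P 0), last (P 0)} = {c 0, c 1}"
    "temporal_path A lam (P 1) (T 1)" "{hd (P 1), last (P 1)} = {c 1, c 2}"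
    "temporal_path A lam (P 2) (T 2)" "{hd (P 2), last (P 2)} = {c 2, c 3}"
    "temporal_path A lam (P 3) (T 3)" "{hd (P 3), last (P 3)} = {c 3, c 4}"
    "temporal_path A lam (P 4) (T 4)" "{hd (P 4), last (P 4)} = {c 4, c 5}"
    "temporal_path A lam (P 5) (T 5)" "{hd (P 5), last (P 5)} = {c 5, c 0}"
    using paths[of 0] paths[of 1, unfolded one_add_one] paths[of 2] paths[of 3] paths[of 4] paths[of 5]
    by simp_all
  have nonadj: "\<not> R (c i) (c j)"
    if "i < 6" "j < 6" "i \<noteq> j" "j \<noteq> (i + 1) mod 6" "i \<noteq> (j + 1) mod 6" for i j
    using reach that unfolding R_def by blast
  have N: "\<not> R (c 0) (c 2)" "\<not> R (c 2) (c 0)" "\<not> R (c 0) (c 3)" "\<not> R (c 3) (c 0)"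
    "\<not> R (c 0) (c 4)" "\<not> R (c 4) (c 0)" "\<not> R (c 1) (c 3)" "\<not> R (c 3) (c 1)"
    "\<not> R (c 1) (c 4)" "\<not> R (c 4) (c 1)" "\<not> R (c 1) (c 5)" "\<not> R (c 5) (c 1)"
    "\<not> R (c 2) (c 4)" "\<not> R (c 4) (c 2)" "\<not> R (c 2) (c 5)" "\<not> R (c 5) (c 2)"
    "\<not> R (c 3) (c 5)" "\<not> R (c 5) (c 3)"
    by (rule nonadj; simp)+
  have "set (P 0) \<inter> set (P 3) = {}"
    by (rule temporal_paths_disjoint[OF P(1,7)], unfold P(2,8)) (use N in \<open>auto simp: R_def\<close>)
  moreover have "set (P 1) \<inter> set (P 4) = {}"
    by (rule temporal_paths_disjoint[OF P(3,9)], unfold P(4,10)) (use N in \<open>auto simp: R_def\<close>)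
  moreover have "set (P 2) \<inter> set (P 5) = {}"
    by (rule temporal_paths_disjoint[OF P(5,11)], unfold P(6,12)) (use N in \<open>auto simp: R_def\<close>)
  moreover have "set (P 0) \<inter> set (P 2) \<inter> set (P 4) = {}"
    by (rule temporal_paths_disjoint3[OF P(1,5,9) P(2,6,10)]) (use N in \<open>auto simp: R_def\<close>)
  moreover have "set (P 1) \<inter> set (P 3) \<inter> set (P 5) = {}"
    by (rule temporal_paths_disjoint3[OF P(3,7,11) P(4,8,12)]) (use N in \<open>auto simp: R_def\<close>)
  ultimately show ?thesis by blast
qed

theorem mainTheorem10:
  fixes V :: "'a set" and A :: "('a \<times> 'a) set"
    and lam :: "'a \<times> 'a \<Rightarrow> nat set" and tmax :: nat
  assumes "temporal_oriented_tree V A lam tmax"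
  shows "\<not> has_induced_cycle V (conn_graph_adj V A lam) 6"
proof
  assume "has_induced_cycle V (conn_graph_adj V A lam) 6"
  then obtain P T and c :: "nat \<Rightarrow> 'a" where
    paths: "\<And>i. i < 6 \<Longrightarrow> temporal_path A lam (P i) (T i) \<and> {hd (P i), last (P i)} = {c i, c ((i + 1) mod 6)}"
    and reach: "\<And>i j. i < 6 \<Longrightarrow> j < 6 \<Longrightarrow> temporally_reaches A lam (c i) (c j) \<Longrightarrow>
      i = j \<or> j = (i + 1) mod 6 \<or> i = (j + 1) mod 6"
    by (rule induced_cycle_temporal_paths) (simp_all, blast)
  have AV: "A \<subseteq> V \<times> V" and acyclic: "und_acyclic V A"
    using assms unfolding temporal_oriented_tree_def oriented_tree_def by auto
  have "(set (P 0) \<union> set (P 1)) \<inter> (set (P 2) \<union> set (P 3)) \<inter> (set (P 4) \<union> set (P 5)) \<noteq> {}"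
  proof (rule und_acyclic_hexagon_meet[where S = "\<lambda>i. set (P i)", OF acyclic])
    fix i :: nat
    assume "i < 6"
    then show "und_connects A V (set (P i)) (c i) (c ((i + 1) mod 6))"
      using temporal_path_und_connects[OF AV] paths und_connects_commute by (metis doubleton_eq_iff)
  qed
  then show False
    using hexagon_temporal_paths_no_common_vertex[where c = c and P = P and T = T, OF paths reach]
    by blast
qed

end
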